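(* Let $(G,\Omega)$ be an $\ell$-permutation group that is o-2 transitive, and let $g,h\in G$ with $h\neq1$ and $\mathrm{supp}(h)\cap\mathrm{supp}(h^g)=\emptyset$. Then there are $f,k\in G$ such that $$[h^{-1},h^f]\,[h^{-g},h^{gk}]\neq[h^{-g},h^{gk}]\,[h^{-1},h^f].$$
   Context: An $\ell$-permutation group $(G,\Omega)$ is a totally ordered set $\Omega$ with a subgroup $G$ of $\mathrm{Aut}(\Omega,\leqslant)$ (acting on the right) closed under pointwise max and min. It is o-2 transitive if $G$ acts transitively on pairs $(\alpha,\beta)$ with $\alpha<\beta$. $\mathrm{supp}(g)=\{\alpha:\alpha g\ne\alpha\}$, $g^f=f^{-1}gf$, $h^{-g}=(h^g)^{-1}$, $[a,b]=a^{-1}b^{-1}ab$. *)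

theory Defs
  imports Main
begin

text \<open>Omega is modelled as a linearly ordered type 'a; permutations act on the right,
  so alpha(g h) = (alpha g) h, i.e. the product g h is the function h o g.\<close>

definition order_aut :: "('a::linorder \<Rightarrow> 'a) \<Rightarrow> bool" where
  "order_aut f \<longleftrightarrow> bij f \<and> strict_mono f"

definition pmult :: "('a \<Rightarrow> 'a) \<Rightarrow> ('a \<Rightarrow> 'a) \<Rightarrow> ('a \<Rightarrow> 'a)" where
  "pmult g h = h \<circ> g"

definition pinv :: "('a \<Rightarrow> 'a) \<Rightarrow> ('a \<Rightarrow> 'a)" where
  "pinv g = inv g"

definition pconj :: "('a \<Rightarrow> 'a) \<Rightarrow> ('a \<Rightarrow> 'a) \<Rightarrow> ('a \<Rightarrow> 'a)" where
  "pconj g f = pmult (pmult (pinv f) g) f"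

definition pcomm :: "('a \<Rightarrow> 'a) \<Rightarrow> ('a \<Rightarrow> 'a) \<Rightarrow> ('a \<Rightarrow> 'a)" where
  "pcomm a b = pmult (pmult (pmult (pinv a) (pinv b)) a) b"

definition supp :: "('a \<Rightarrow> 'a) \<Rightarrow> 'a set" where
  "supp g = {\<alpha>. g \<alpha> \<noteq> \<alpha>}"

definition l_perm_group :: "('a::linorder \<Rightarrow> 'a) set \<Rightarrow> bool" where
  "l_perm_group G \<longleftrightarrow>
     (\<forall>g\<in>G. order_aut g) \<and> id \<in> G \<and>
     (\<forall>g\<in>G. \<forall>h\<in>G. pmult g h \<in> G) \<and>
     (\<forall>g\<in>G. pinv g \<in> G) \<and>
     (\<forall>g\<in>G. \<forall>h\<in>G. (\<lambda>\<alpha>. max (g \<alpha>) (h \<alpha>)) \<in> G \<and> (\<lambda>\<alpha>. min (g \<alpha>) (h \<alpha>)) \<in> G)"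

definition o2_transitive :: "('a::linorder \<Rightarrow> 'a) set \<Rightarrow> bool" where
  "o2_transitive G \<longleftrightarrow>
     (\<forall>\<alpha> \<beta> \<gamma> \<delta>. \<alpha> < \<beta> \<and> \<gamma> < \<delta> \<longrightarrow> (\<exists>g\<in>G. g \<alpha> = \<gamma> \<and> g \<beta> = \<delta>))"

end

theory Submission
  imports Defs
begin

(* Take a \<in> supp h and b = a g \<in> supp h^g; as g preserves the order, h^g moves b in the same
   direction as h moves a, so one of the two points lies strictly between the other and its
   image, say a between b and a h (otherwise exchange the roles of h and h^g).
   Using o-2 transitivity, and o-3 transitivity obtained from it through the lattice
   operations, pick f with a \<mapsto> b, a h \<mapsto> a h and m with a h\<^sup>-\<^sup>1 \<mapsto> b, a \<mapsto> a, a h \<mapsto> a h.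
   Then u = [h\<^sup>-\<^sup>1, h^f] sends a to a h, whereas v = [h\<^sup>-\<^sup>g, h^m] fixes a h but moves a, since
   (h^m)\<^sup>-\<^sup>1 carries a to b, which h\<^sup>-\<^sup>g moves. Hence uv and vu differ at a. Finally
   h^(g k) = (h^g)^k translates between conjugates of h and of h^g in both cases. *)

lemma l_perm_group_bij: "l_perm_group G \<Longrightarrow> g \<in> G \<Longrightarrow> bij g"
  by (simp add: l_perm_group_def order_aut_def)

lemma l_perm_group_strict_mono: "l_perm_group G \<Longrightarrow> g \<in> G \<Longrightarrow> strict_mono g"
  by (simp add: l_perm_group_def order_aut_def)

lemma l_perm_group_id: "l_perm_group G \<Longrightarrow> id \<in> G"
  by (simp add: l_perm_group_def)

lemma l_perm_group_pmult: "l_perm_group G \<Longrightarrow> g \<in> G \<Longrightarrow> h \<in> G \<Longrightarrow> pmult g h \<in> G"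
  by (simp add: l_perm_group_def)

lemma l_perm_group_pinv: "l_perm_group G \<Longrightarrow> g \<in> G \<Longrightarrow> pinv g \<in> G"
  by (simp add: l_perm_group_def)

lemma l_perm_group_pconj: "l_perm_group G \<Longrightarrow> g \<in> G \<Longrightarrow> f \<in> G \<Longrightarrow> pconj g f \<in> G"
  by (simp add: pconj_def l_perm_group_pmult l_perm_group_pinv)

lemma l_perm_group_max_id: "l_perm_group G \<Longrightarrow> g \<in> G \<Longrightarrow> (\<lambda>\<alpha>. max (g \<alpha>) \<alpha>) \<in> G"
proof -
  assume G: "l_perm_group G" and "g \<in> G"
  then have "(\<lambda>\<alpha>. max (g \<alpha>) (id \<alpha>)) \<in> G"
    using l_perm_group_id[OF G] unfolding l_perm_group_def by blast
  then show ?thesis by simp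
qed

lemma l_perm_group_min:
  "l_perm_group G \<Longrightarrow> g \<in> G \<Longrightarrow> h \<in> G \<Longrightarrow> (\<lambda>\<alpha>. min (g \<alpha>) (h \<alpha>)) \<in> G"
  by (simp add: l_perm_group_def)

lemma o2_transitiveD:
  "o2_transitive G \<Longrightarrow> \<alpha> < \<beta> \<Longrightarrow> \<gamma> < \<delta> \<Longrightarrow> \<exists>g\<in>G. g \<alpha> = \<gamma> \<and> g \<beta> = \<delta>"
  by (simp add: o2_transitive_def)

lemma pconj_eq: "pconj g f = f \<circ> g \<circ> inv f"
  by (auto simp: pconj_def pmult_def pinv_def)

lemma pconj_apply: "inj f \<Longrightarrow> pconj g f (f \<alpha>) = f (g \<alpha>)"
  by (simp add: pconj_eq)

lemma pconj_pmult: "bij g \<Longrightarrow> bij k \<Longrightarrow> pconj h (pmult g k) = pconj (pconj h g) k"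
  by (simp add: pconj_eq pmult_def o_inv_distrib comp_assoc)

lemma pcomm_pinv_eq: "bij a \<Longrightarrow> pcomm (pinv a) b = b \<circ> inv a \<circ> inv b \<circ> a"
  by (simp add: pcomm_def pmult_def pinv_def inv_inv_eq comp_assoc)

lemma stabilizer_moves_up:
  fixes \<alpha> \<beta> \<gamma> \<delta> :: "'a::linorder"
  assumes G: "l_perm_group G" "o2_transitive G"
    and "\<alpha> < \<gamma>" "\<beta> < \<gamma>" "\<gamma> < \<delta>"
  shows "\<exists>s\<in>G. s \<alpha> = \<alpha> \<and> s \<beta> = \<beta> \<and> s \<gamma> = \<delta>"
proof -
  obtain e where e: "e \<in> G" "e \<alpha> = \<alpha>" "e \<gamma> = \<delta>"
    using o2_transitiveD[OF G(2), of \<alpha> \<gamma> \<alpha> \<delta>] assms by force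
  obtain t where t: "t \<in> G" "t \<beta> = \<beta>" "t \<gamma> = \<delta>"
    using o2_transitiveD[OF G(2), of \<beta> \<gamma> \<beta> \<delta>] assms by force
  \<comment> \<open>both positive parts lie above the identity, so their meet fixes \<alpha> and \<beta>\<close>
  define s where "s = (\<lambda>z. min (max (e z) z) (max (t z) z))"
  have "s \<in> G"
    unfolding s_def by (intro l_perm_group_min l_perm_group_max_id G(1) e(1) t(1))
  moreover have "s \<alpha> = \<alpha>" "s \<beta> = \<beta>" "s \<gamma> = \<delta>"
    using e t assms by (auto simp: s_def)
  ultimately show ?thesis by blast
qed

lemma stabilizer_transitive_above:
  fixes \<alpha> \<beta> \<gamma> \<delta> :: "'a::linorder"
  assumes G: "l_perm_group G" "o2_transitive G"
    and "\<alpha> < \<gamma>" "\<beta> < \<gamma>" "\<alpha> < \<delta>" "\<beta> < \<delta>"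
  shows "\<exists>s\<in>G. s \<alpha> = \<alpha> \<and> s \<beta> = \<beta> \<and> s \<gamma> = \<delta>"
proof (cases \<gamma> \<delta> rule: linorder_cases)
  case less
  then show ?thesis using stabilizer_moves_up[OF G assms(3,4)] by blast
next
  case equal
  then show ?thesis using l_perm_group_id[OF G(1)] by (intro bexI[of _ id]) simp_all
next
  case greater
  then obtain s where s: "s \<in> G" "s \<alpha> = \<alpha>" "s \<beta> = \<beta>" "s \<delta> = \<gamma>"
    using stabilizer_moves_up[OF G assms(5,6)] by blast
  have "bij s" using l_perm_group_bij[OF G(1) s(1)] .
  then have "pinv s \<alpha> = \<alpha>" "pinv s \<beta> = \<beta>" "pinv s \<gamma> = \<delta>"
    using s by (simp_all add: pinv_def bij_inv_eq_iff[symmetric])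
  then show ?thesis using l_perm_group_pinv[OF G(1) s(1)] by blast
qed

lemma o3_transitive:
  fixes p1 p2 p3 q1 q2 q3 :: "'a::linorder"
  assumes G: "l_perm_group G" "o2_transitive G"
    and "p1 < p2" "p2 < p3" "q1 < q2" "q2 < q3"
  shows "\<exists>f\<in>G. f p1 = q1 \<and> f p2 = q2 \<and> f p3 = q3"
proof -
  obtain f where f: "f \<in> G" "f p1 = q1" "f p2 = q2"
    using o2_transitiveD[OF G(2)] assms by blast
  have "q2 < f p3"
    using l_perm_group_strict_mono[OF G(1) f(1)] f assms by (metis strict_mono_less)
  then obtain s where s: "s \<in> G" "s q1 = q1" "s q2 = q2" "s (f p3) = q3"
    using stabilizer_transitive_above[OF G, of q1 "f p3" q2 q3] assms by force
  then have "pmult f s p1 = q1 \<and> pmult f s p2 = q2 \<and> pmult f s p3 = q3"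
    using f by (simp add: pmult_def)
  then show ?thesis using l_perm_group_pmult[OF G(1) f(1) s(1)] by blast
qed

definition strictly_between :: "'a::linorder \<Rightarrow> 'a \<Rightarrow> 'a \<Rightarrow> bool" where
  "strictly_between x y z \<longleftrightarrow> x < y \<and> y < z \<or> z < y \<and> y < x"

lemma conjugating_witnesses:
  fixes A :: "'a::linorder \<Rightarrow> 'a"
  assumes G: "l_perm_group G" "o2_transitive G" and "A \<in> G"
    and between: "strictly_between \<beta> \<alpha> (A \<alpha>)"
  shows "\<exists>f\<in>G. \<exists>m\<in>G. f \<alpha> = \<beta> \<and> f (A \<alpha>) = A \<alpha> \<and>
           m (inv A \<alpha>) = \<beta> \<and> m \<alpha> = \<alpha> \<and> m (A \<alpha>) = A \<alpha>"
proof -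
  have "A (inv A \<alpha>) = \<alpha>"
    using l_perm_group_bij[OF G(1) \<open>A \<in> G\<close>] by (simp add: bij_is_surj surj_f_inv_f)
  then have inv_side: "inv A \<alpha> < \<alpha> \<longleftrightarrow> \<alpha> < A \<alpha>" "\<alpha> < inv A \<alpha> \<longleftrightarrow> A \<alpha> < \<alpha>"
    using l_perm_group_strict_mono[OF G(1) \<open>A \<in> G\<close>] by (metis strict_mono_less)+
  from between consider "\<beta> < \<alpha>" "\<alpha> < A \<alpha>" | "A \<alpha> < \<alpha>" "\<alpha> < \<beta>"
    unfolding strictly_between_def by blast
  then show ?thesis
  proof cases
    case 1
    then obtain f where "f \<in> G" "f \<alpha> = \<beta>" "f (A \<alpha>) = A \<alpha>"
      using o2_transitiveD[OF G(2), of \<alpha> "A \<alpha>" \<beta> "A \<alpha>"] by force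
    moreover obtain m where "m \<in> G" "m (inv A \<alpha>) = \<beta>" "m \<alpha> = \<alpha>" "m (A \<alpha>) = A \<alpha>"
      using o3_transitive[OF G, of "inv A \<alpha>" \<alpha> "A \<alpha>" \<beta> \<alpha> "A \<alpha>"] 1 inv_side by blast
    ultimately show ?thesis by blast
  next
    case 2
    then obtain f where "f \<in> G" "f \<alpha> = \<beta>" "f (A \<alpha>) = A \<alpha>"
      using o2_transitiveD[OF G(2), of "A \<alpha>" \<alpha> "A \<alpha>" \<beta>] by force
    moreover obtain m where "m \<in> G" "m (inv A \<alpha>) = \<beta>" "m \<alpha> = \<alpha>" "m (A \<alpha>) = A \<alpha>"
      using o3_transitive[OF G, of "A \<alpha>" \<alpha> "inv A \<alpha>" "A \<alpha>" \<alpha> \<beta>] 2 inv_side by blast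
    ultimately show ?thesis by blast
  qed
qed

lemma commutators_not_commute_at:
  fixes A B f m :: "'a \<Rightarrow> 'a"
  assumes bij: "bij A" "bij B" "bij f" "bij m"
    and disjoint: "supp A \<inter> supp B = {}" and "A \<alpha> \<noteq> \<alpha>" "B \<beta> \<noteq> \<beta>"
    and f: "f \<alpha> = \<beta>" "f (A \<alpha>) = A \<alpha>"
    and m: "m (inv A \<alpha>) = \<beta>" "m \<alpha> = \<alpha>" "m (A \<alpha>) = A \<alpha>"
  shows "pmult (pcomm (pinv A) (pconj A f)) (pcomm (pinv B) (pconj A m))
    \<noteq> pmult (pcomm (pinv B) (pconj A m)) (pcomm (pinv A) (pconj A f))"
proof -
  define y where "y = pconj A f"
  define w where "w = pconj A m"
  define u where "u = pcomm (pinv A) y"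
  define v where "v = pcomm (pinv B) w"
  have "bij y" "bij w"
    unfolding y_def w_def pconj_eq using bij by (simp_all add: bij_comp bij_imp_bij_inv)
  have "A (A \<alpha>) \<noteq> A \<alpha>"
    using \<open>A \<alpha> \<noteq> \<alpha>\<close> bij(1) by (metis bij_is_inj injD)
  then have "A \<beta> = \<beta>" "B \<alpha> = \<alpha>" "B (A \<alpha>) = A \<alpha>"
    using disjoint \<open>A \<alpha> \<noteq> \<alpha>\<close> \<open>B \<beta> \<noteq> \<beta>\<close> by (auto simp: supp_def)
  have "y \<beta> = A \<alpha>"
    using pconj_apply[OF bij_is_inj[OF bij(3)], of A \<alpha>] f by (simp add: y_def)
  have "w \<beta> = \<alpha>"
    using pconj_apply[OF bij_is_inj[OF bij(4)], of A "inv A \<alpha>"] m bij(1)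
    by (simp add: w_def bij_is_surj surj_f_inv_f)
  have "w \<alpha> = A \<alpha>"
    using pconj_apply[OF bij_is_inj[OF bij(4)], of A \<alpha>] m by (simp add: w_def)
  have "inv y (A \<alpha>) = \<beta>" "inv A \<beta> = \<beta>" "inv w (A \<alpha>) = \<alpha>" "inv w \<alpha> = \<beta>" "inv B \<alpha> = \<alpha>"
    using \<open>y \<beta> = A \<alpha>\<close> \<open>A \<beta> = \<beta>\<close> \<open>w \<alpha> = A \<alpha>\<close> \<open>w \<beta> = \<alpha>\<close> \<open>B \<alpha> = \<alpha>\<close>
      \<open>bij y\<close> \<open>bij w\<close> bij(1,2)
    by (metis bij_inv_eq_iff)+
  then have u_\<alpha>: "u \<alpha> = A \<alpha>" and v_A\<alpha>: "v (A \<alpha>) = A \<alpha>" and "v \<alpha> = w (inv B \<beta>)"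
    using \<open>y \<beta> = A \<alpha>\<close> \<open>w \<alpha> = A \<alpha>\<close> \<open>B \<alpha> = \<alpha>\<close> \<open>B (A \<alpha>) = A \<alpha>\<close> bij(1,2)
    by (simp_all add: u_def v_def pcomm_pinv_eq)
  moreover have "inv B \<beta> \<noteq> \<beta>"
    using \<open>B \<beta> \<noteq> \<beta>\<close> bij(2) by (metis bij_inv_eq_iff)
  ultimately have "v \<alpha> \<noteq> \<alpha>"
    using \<open>w \<beta> = \<alpha>\<close> \<open>bij w\<close> by (metis bij_is_inj injD)
  moreover have "inj u"
    using \<open>bij y\<close> bij(1) by (simp add: u_def pcomm_pinv_eq bij_comp bij_imp_bij_inv bij_is_inj)
  ultimately have "pmult v u \<alpha> \<noteq> A \<alpha>"
    using u_\<alpha> by (metis pmult_def comp_apply injD)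
  moreover have "pmult u v \<alpha> = A \<alpha>"
    using u_\<alpha> v_A\<alpha> by (simp add: pmult_def)
  ultimately show ?thesis
    unfolding u_def v_def y_def w_def by metis
qed

lemma exists_noncommuting_commutators:
  fixes A B :: "'a::linorder \<Rightarrow> 'a"
  assumes G: "l_perm_group G" "o2_transitive G" and "A \<in> G" "B \<in> G"
    and "supp A \<inter> supp B = {}" "A \<alpha> \<noteq> \<alpha>" "B \<beta> \<noteq> \<beta>"
    and "strictly_between \<beta> \<alpha> (A \<alpha>)"
  shows "\<exists>f\<in>G. \<exists>m\<in>G. pmult (pcomm (pinv A) (pconj A f)) (pcomm (pinv B) (pconj A m))
    \<noteq> pmult (pcomm (pinv B) (pconj A m)) (pcomm (pinv A) (pconj A f))"
proof -
  obtain f m where "f \<in> G" "m \<in> G" "f \<alpha> = \<beta>" "f (A \<alpha>) = A \<alpha>"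
      "m (inv A \<alpha>) = \<beta>" "m \<alpha> = \<alpha>" "m (A \<alpha>) = A \<alpha>"
    using conjugating_witnesses[OF G \<open>A \<in> G\<close> \<open>strictly_between \<beta> \<alpha> (A \<alpha>)\<close>] by blast
  moreover note commutators_not_commute_at[of A B f m \<alpha> \<beta>]
  ultimately show ?thesis
    using assms l_perm_group_bij[OF G(1)] by blast
qed

lemma point_or_conjugate_point_between:
  fixes g h :: "'a::linorder \<Rightarrow> 'a"
  assumes "strict_mono g" and "supp h \<inter> supp (pconj h g) = {}" and "h a \<noteq> a"
  shows "pconj h g (g a) \<noteq> g a"
    and "strictly_between (g a) a (h a) \<or> strictly_between a (g a) (pconj h g (g a))"
proof -
  have "pconj h g (g a) = g (h a)"
    using pconj_apply[OF strict_mono_imp_inj_on[OF \<open>strict_mono g\<close>]] .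
  then have moved: "pconj h g (g a) \<noteq> g a"
    and same_direction: "g a < pconj h g (g a) \<longleftrightarrow> a < h a"
    using \<open>h a \<noteq> a\<close> \<open>strict_mono g\<close> by (auto simp: strict_mono_eq strict_mono_less)
  then show "pconj h g (g a) \<noteq> g a" by blast
  have "a \<noteq> g a"
    using assms(2) \<open>h a \<noteq> a\<close> moved by (auto simp: supp_def)
  with moved same_direction
  show "strictly_between (g a) a (h a) \<or> strictly_between a (g a) (pconj h g (g a))"
    using \<open>h a \<noteq> a\<close> unfolding strictly_between_def by (metis neq_iff)
qed

theorem lemma3p1:
  fixes G :: "('a::linorder \<Rightarrow> 'a) set" and g h :: "'a \<Rightarrow> 'a"
  assumes "l_perm_group G" and "o2_transitive G"
    and "g \<in> G" and "h \<in> G" and "h \<noteq> id"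
    and "supp h \<inter> supp (pconj h g) = {}"
  shows "\<exists>f\<in>G. \<exists>k\<in>G.
    pmult (pcomm (pinv h) (pconj h f)) (pcomm (pinv (pconj h g)) (pconj h (pmult g k)))
    \<noteq> pmult (pcomm (pinv (pconj h g)) (pconj h (pmult g k))) (pcomm (pinv h) (pconj h f))"
proof -
  note G = assms(1,2)
  have "bij g" using l_perm_group_bij[OF G(1) \<open>g \<in> G\<close>] .
  have hg: "pconj h g \<in> G" using l_perm_group_pconj[OF G(1) \<open>h \<in> G\<close> \<open>g \<in> G\<close>] .
  obtain a where "h a \<noteq> a" using \<open>h \<noteq> id\<close> by (metis eq_id_iff)
  note between = point_or_conjugate_point_between[OF
      l_perm_group_strict_mono[OF G(1) \<open>g \<in> G\<close>] assms(6) this]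
  then consider "strictly_between (g a) a (h a)" | "strictly_between a (g a) (pconj h g (g a))"
    by blast
  then show ?thesis
  proof cases
    case 1
    then obtain f m where "f \<in> G" "m \<in> G"
      "pmult (pcomm (pinv h) (pconj h f)) (pcomm (pinv (pconj h g)) (pconj h m))
       \<noteq> pmult (pcomm (pinv (pconj h g)) (pconj h m)) (pcomm (pinv h) (pconj h f))"
      using exists_noncommuting_commutators[OF G \<open>h \<in> G\<close> hg assms(6) \<open>h a \<noteq> a\<close> between(1)]
      by blast
    moreover have "pmult g (pmult (pinv g) m) = m"
      using \<open>bij g\<close> by (simp add: pmult_def pinv_def comp_assoc bij_is_inj)
    ultimately show ?thesis
      using l_perm_group_pmult[OF G(1) l_perm_group_pinv[OF G(1) \<open>g \<in> G\<close>]] by metis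
  next
    case 2
    then obtain k m where "k \<in> G" "m \<in> G"
      "pmult (pcomm (pinv (pconj h g)) (pconj (pconj h g) k)) (pcomm (pinv h) (pconj (pconj h g) m))
       \<noteq> pmult (pcomm (pinv h) (pconj (pconj h g) m)) (pcomm (pinv (pconj h g)) (pconj (pconj h g) k))"
      using exists_noncommuting_commutators[OF G hg \<open>h \<in> G\<close> _ between(1) \<open>h a \<noteq> a\<close>] assms(6)
      by (metis Int_commute)
    moreover note pconj_pmult[OF \<open>bij g\<close> l_perm_group_bij[OF G(1)], of _ h]
    ultimately show ?thesis
      using l_perm_group_pmult[OF G(1) \<open>g \<in> G\<close>] by metis
  qed
qed

end
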